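(* Let $H\ne\{1\}$ be a reduced atomic unit-cancellative monoid and suppose that at least one of the following holds: (a) there is $L\in\mathcal L(H)$ with $\rho(L)=\rho(H)<\infty$; (b) $H$ is cancellative and its monoid of relations $\sim_H$ is finitely generated; (c) $H$ is commutative and finitely generated. Then there is $M\in\mathbb N$ such that $\rho_k(H)-\rho_{k-1}(H)\le M$ for all $k\ge 2$ (in particular $\rho_k(H)<\infty$ for all $k\in\mathbb N$).
   Context: Monoid = associative semigroup with identity; reduced means the only unit is $1$; unit-cancellative means $a=au$ or $a=ua$ implies $u$ is a unit; atomic means every non-unit is a finite product of atoms (irreducible non-units). For $a\in H$, $\mathsf L(a)\subset\mathbb N$ is the set of all $k$ such that $a$ is a product of $k$ atoms, with $\mathsf L(1)=\{0\}$; $\mathcal L(H)=\{\mathsf L(a)\mid a\in H\}$. For $L\subset\mathbb N_0$, $\rho(L)=\sup(L\cap\mathbb N)/\min(L\cap\mathbb N)$ if $L\cap\mathbb N\neq\emptyset$ and $\rho(L)=1$ otherwise; $\rho(H)=\sup\{\rho(L)\mid L\in\mathcal L(H)\}$. For $k\in\mathbb N$, $\mathcal U_k(H)=\bigcup\{L\in\mathcal L(H)\mid k\in L\}$ and $\rho_k(H)=\sup\mathcal U_k(H)$. The factorization monoid $\mathsf Z(H)$ is the free monoid on the atoms (free abelian if $H$ is commutative), $\pi:\mathsf Z(H)\to H$ the canonical epimorphism, and $\sim_H=\{(x,y)\in\mathsf Z(H)^2\mid \pi(x)=\pi(y)\}$ is the monoid of relations (componentwise multiplication). *)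

theory Defs
  imports Main "HOL-Library.Multiset" "HOL-Library.Extended_Real"
begin

text \<open>The monoid H is the type 'a of class monoid_mult.\<close>

definition is_unit :: "'a::monoid_mult \<Rightarrow> bool" where
  "is_unit u \<longleftrightarrow> (\<exists>v. u * v = 1 \<and> v * u = 1)"

definition reduced :: "'a::monoid_mult itself \<Rightarrow> bool" where
  "reduced _ \<longleftrightarrow> (\<forall>u::'a. is_unit u \<longrightarrow> u = 1)"

definition unit_cancellative :: "'a::monoid_mult itself \<Rightarrow> bool" where
  "unit_cancellative _ \<longleftrightarrow> (\<forall>a u::'a. (a = a * u \<or> a = u * a) \<longrightarrow> is_unit u)"

definition cancellative :: "'a::monoid_mult itself \<Rightarrow> bool" where
  "cancellative _ \<longleftrightarrow> (\<forall>a b c::'a. (a * b = a * c \<longrightarrow> b = c) \<and> (b * a = c * a \<longrightarrow> b = c))"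

definition commutative :: "'a::monoid_mult itself \<Rightarrow> bool" where
  "commutative _ \<longleftrightarrow> (\<forall>a b::'a. a * b = b * a)"

definition is_atom :: "'a::monoid_mult \<Rightarrow> bool" where
  "is_atom a \<longleftrightarrow> \<not> is_unit a \<and> (\<forall>b c. a = b * c \<longrightarrow> is_unit b \<or> is_unit c)"

definition atomic :: "'a::monoid_mult itself \<Rightarrow> bool" where
  "atomic _ \<longleftrightarrow> (\<forall>a::'a. \<not> is_unit a \<longrightarrow>
      (\<exists>xs. xs \<noteq> [] \<and> (\<forall>x\<in>set xs. is_atom x) \<and> prod_list xs = a))"

definition lengths :: "'a::monoid_mult \<Rightarrow> nat set" where
  "lengths a = (if a = 1 then {0}
      else {length xs | xs. (\<forall>x\<in>set xs. is_atom x) \<and> prod_list xs = a})"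

definition system_of_lengths :: "'a::monoid_mult itself \<Rightarrow> nat set set" where
  "system_of_lengths _ = range (lengths :: 'a \<Rightarrow> nat set)"

definition elasticity_set :: "nat set \<Rightarrow> ereal" where
  "elasticity_set L = (if L - {0} \<noteq> {}
      then Sup ((\<lambda>n. ereal (real n)) ` (L - {0})) / ereal (real (Inf (L - {0})))
      else 1)"

definition elasticity :: "'a::monoid_mult itself \<Rightarrow> ereal" where
  "elasticity H = (SUP L \<in> system_of_lengths H. elasticity_set L)"

definition union_of_sets_of_lengths :: "'a::monoid_mult itself \<Rightarrow> nat \<Rightarrow> nat set" where
  "union_of_sets_of_lengths H k = \<Union> {L \<in> system_of_lengths H. k \<in> L}"

definition rho_k :: "'a::monoid_mult itself \<Rightarrow> nat \<Rightarrow> ereal" where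
  "rho_k H k = Sup ((\<lambda>n. ereal (real n)) ` union_of_sets_of_lengths H k)"

text \<open>Monoid of relations: for non-commutative H, Z(H) is the free monoid on the atoms
  (lists of atoms); for commutative H it is the free abelian monoid (multisets of atoms).\<close>

definition relations_list :: "'a::monoid_mult itself \<Rightarrow> ('a list \<times> 'a list) set" where
  "relations_list _ = {(xs, ys) | xs ys :: 'a list. (\<forall>x\<in>set xs. is_atom x) \<and>
      (\<forall>y\<in>set ys. is_atom y) \<and> prod_list xs = prod_list ys}"

definition relations_mset :: "'a::monoid_mult itself \<Rightarrow> ('a multiset \<times> 'a multiset) set" where
  "relations_mset _ = {(mset xs, mset ys) | xs ys :: 'a list. (\<forall>x\<in>set xs. is_atom x) \<and>
      (\<forall>y\<in>set ys. is_atom y) \<and> prod_list xs = prod_list ys}"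

definition relations_fin_gen :: "'a::monoid_mult itself \<Rightarrow> bool" where
  "relations_fin_gen H \<longleftrightarrow>
    (if commutative H then
       (\<exists>G. finite G \<and> G \<subseteq> relations_mset H \<and>
          (\<forall>r\<in>relations_mset H. \<exists>gs. set gs \<subseteq> G \<and>
              r = (sum_list (map fst gs), sum_list (map snd gs))))
     else
       (\<exists>G. finite G \<and> G \<subseteq> relations_list H \<and>
          (\<forall>r\<in>relations_list H. \<exists>gs. set gs \<subseteq> G \<and>
              r = (concat (map fst gs), concat (map snd gs)))))"

definition finitely_generated :: "'a::monoid_mult itself \<Rightarrow> bool" where
  "finitely_generated _ \<longleftrightarrow>
    (\<exists>G::'a set. finite G \<and> (\<forall>a. \<exists>xs. set xs \<subseteq> G \<and> prod_list xs = a))"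

end

theory Submission
  imports Defs
begin

text \<open>Suppose a relation \<open>D \<sim> E\<close> between factorizations has the largest length ratio
  \<open>t/p = |E|/|D|\<close> among all relations of \<open>H\<close>. Then every \<open>l \<in> U\<^sub>k(H)\<close> satisfies
  \<open>l p \<le> t k\<close>, so \<open>\<rho>\<^sub>k(H) \<le> t k / p\<close>. Conversely, write \<open>k - 1 = |X| + j p + r\<close> with \<open>r < p\<close>;
  replacing \<open>D\<^sup>j\<close> by \<open>E\<^sup>j\<close> in the factorization \<open>X D\<^sup>j u\<^sup>r\<close> (\<open>u\<close> an atom) of length \<open>k - 1\<close>
  gives a factorization of length \<open>|X| + j t + r\<close>, so \<open>\<rho>\<^sub>k\<^sub>-\<^sub>1(H) \<ge> t (k - 1) / p - C\<close>, and the
  increments \<open>\<rho>\<^sub>k(H) - \<rho>\<^sub>k\<^sub>-\<^sub>1(H)\<close> are bounded.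

  An extremal relation exists in each case. In (a) it is given by factorizations of minimal and
  maximal length of an element whose set of lengths attains \<open>\<rho>(H)\<close>. In (b) and (c) every relation
  is a sum of relations from a finite set, and the length ratio of a sum is at most the largest ratio
  of its summands. In (c) this finite set consists of the minimal relations up to a common factor,
  finitely many by Dickson's lemma.\<close>

section \<open>Factorizations and unions of sets of lengths\<close>

abbreviation atom_list :: "'a::monoid_mult list \<Rightarrow> bool" where
  "atom_list xs \<equiv> \<forall>x\<in>set xs. is_atom x"

lemma is_unit_one [simp]: "is_unit 1"
  by (simp add: is_unit_def)

lemma atom_neq_one: "is_atom x \<Longrightarrow> x \<noteq> 1"
  by (auto simp: is_atom_def)

lemma mem_relations_list_iff [simp]:
  "(xs, ys) \<in> relations_list H \<longleftrightarrow> atom_list xs \<and> atom_list ys \<and> prod_list xs = prod_list ys"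
  by (simp add: relations_list_def)

lemma relations_mset_eq_image:
  "relations_mset H = (\<lambda>(xs, ys). (mset xs, mset ys)) ` relations_list H"
  unfolding relations_mset_def relations_list_def by (auto simp: image_iff)

lemma size_sum_list_map: "size (sum_list (map f xs)) = (\<Sum>x\<leftarrow>xs. size (f x :: 'a multiset))"
  by (induction xs) simp_all

lemma atomicD:
  fixes H :: "'a::monoid_mult itself"
  assumes "atomic H" "\<not> is_unit (a::'a)"
  shows "\<exists>xs. xs \<noteq> [] \<and> atom_list xs \<and> prod_list xs = a"
  using assms unfolding atomic_def by blast

lemma prod_list_concat_replicate: "prod_list (concat (replicate j xs)) = prod_list xs ^ j"
  by (induction j) (simp_all add: power_commutes)

lemma atom_mem_if_prod_list_eq:
  assumes "reduced (H::'a::monoid_mult itself)" "is_atom (u::'a)" "prod_list xs = u"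
  shows "u \<in> set xs"
  using assms(3)
proof (induction xs)
  case Nil
  then show ?case using atom_neq_one[OF assms(2)] by simp
next
  case (Cons x xs)
  then have "is_unit x \<or> is_unit (prod_list xs)"
    using assms(2) by (auto simp: is_atom_def)
  then have "x = 1 \<or> prod_list xs = 1"
    using assms(1) by (auto simp: reduced_def)
  then show ?case
    using Cons by auto
qed

lemma mem_union_of_sets_of_lengths_iff:
  fixes H :: "'a::monoid_mult itself"
  shows "l \<in> union_of_sets_of_lengths H k \<longleftrightarrow> (\<exists>a::'a. k \<in> lengths a \<and> l \<in> lengths a)"
  unfolding union_of_sets_of_lengths_def system_of_lengths_def by blast

lemma mem_lengthsE:
  assumes "l \<in> lengths a" "a \<noteq> 1"
  obtains xs where "atom_list xs" "prod_list xs = a" "length xs = l"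
  using assms unfolding lengths_def by auto

lemma relation_if_mem_union_of_sets_of_lengths:
  fixes H :: "'a::monoid_mult itself"
  assumes "l \<in> union_of_sets_of_lengths H k" "k \<ge> 1"
  obtains xs ys where "(xs, ys) \<in> relations_list H" "length xs = k" "length ys = l"
proof -
  obtain a :: 'a where a: "k \<in> lengths a" "l \<in> lengths a"
    using assms(1) mem_union_of_sets_of_lengths_iff by blast
  moreover have "a \<noteq> 1"
    using a(1) assms(2) by (auto simp: lengths_def)
  ultimately obtain xs ys where "atom_list xs" "prod_list xs = a" "length xs = k"
    and "atom_list ys" "prod_list ys = a" "length ys = l"
    by (metis mem_lengthsE)
  then show ?thesis
    by (intro that) auto
qed

lemma le_rho_k: "l \<in> union_of_sets_of_lengths H k \<Longrightarrow> ereal (real l) \<le> rho_k H k"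
  unfolding rho_k_def by (rule Sup_upper) simp

lemma rho_k_le_if_length_ratio_bound:
  fixes H :: "'a::monoid_mult itself"
  assumes "p > 0" and bound: "\<forall>(xs, ys)\<in>relations_list H. length ys * p \<le> t * length xs"
    and "k \<ge> 1"
  shows "rho_k H k \<le> ereal (real (t * k) / real p)"
  unfolding rho_k_def
proof (rule Sup_least)
  fix y assume "y \<in> (\<lambda>n. ereal (real n)) ` union_of_sets_of_lengths H k"
  then obtain l where l: "l \<in> union_of_sets_of_lengths H k" "y = ereal (real l)"
    by blast
  then obtain xs ys where "(xs, ys) \<in> relations_list H" "length xs = k" "length ys = l"
    using relation_if_mem_union_of_sets_of_lengths \<open>k \<ge> 1\<close> by metis
  then have "l * p \<le> t * k"
    using bound by fastforce
  then have "real l * real p \<le> real (t * k)"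
    by (metis of_nat_le_iff of_nat_mult)
  then show "y \<le> ereal (real (t * k) / real p)"
    using l(2) \<open>p > 0\<close> by (simp add: pos_le_divide_eq)
qed

text \<open>The prefix \<open>X\<close> is only needed in the non-cancellative case (c), where \<open>D\<close> and \<open>E\<close>
  have equal products only after multiplication by some \<open>c = prod_list X\<close>.\<close>
definition pumpable_relation :: "'a::monoid_mult list \<Rightarrow> 'a list \<Rightarrow> bool" where
  "pumpable_relation D E \<longleftrightarrow> atom_list D \<and> atom_list E \<and>
     (\<exists>X. atom_list X \<and>
        (\<forall>j. prod_list (X @ concat (replicate j D)) = prod_list (X @ concat (replicate j E))))"

lemma pumpable_relation_if_relation:
  "(D, E) \<in> relations_list H \<Longrightarrow> pumpable_relation D E"
  unfolding pumpable_relation_def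
  by (auto intro!: exI[of _ "[]"] simp: prod_list_concat_replicate)

lemma elasticity_set_ge_ratio:
  assumes "0 \<notin> L" "l \<in> L" "l' \<in> L"
  shows "ereal (real l' / real l) \<le> elasticity_set L"
proof -
  have L: "L - {0} = L" "L \<noteq> {}"
    using assms(1,2) by auto
  have "Inf L \<in> L"
    using L(2) by (rule Inf_nat_def1)
  then have "Inf L > 0"
    using assms(1) by (cases "Inf L") auto
  have "Inf L \<le> l"
    using assms(2) by (rule wellorder_Inf_le1)
  have "real l' / real l \<le> real l' / real (Inf L)"
    using \<open>Inf L > 0\<close> \<open>Inf L \<le> l\<close> by (intro divide_left_mono) simp_all
  then have "ereal (real l' / real l) \<le> ereal (real l') / ereal (real (Inf L))"
    using \<open>Inf L > 0\<close> by simp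
  also have "\<dots> \<le> Sup ((\<lambda>n. ereal (real n)) ` L) / ereal (real (Inf L))"
    using assms(3) \<open>Inf L > 0\<close> by (intro ereal_divide_right_mono Sup_upper) simp_all
  also have "\<dots> = elasticity_set L"
    using L by (simp add: elasticity_set_def)
  finally show ?thesis .
qed

lemma finite_if_elasticity_set_less_infinity:
  assumes "0 \<notin> L" "elasticity_set L < \<infinity>"
  shows "finite L"
proof (cases "L = {}")
  case False
  then obtain l where "l \<in> L"
    by blast
  have "elasticity_set L \<noteq> \<infinity>"
    using assms(2) by simp
  then obtain n :: nat where n: "elasticity_set L < ereal (real n)"
    unfolding less_PInf_Ex_of_nat ..
  have "l' < n * l" if "l' \<in> L" for l'
  proof -
    have "ereal (real l' / real l) < ereal (real n)"
      using elasticity_set_ge_ratio[OF assms(1) \<open>l \<in> L\<close> that] n by (rule le_less_trans)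
    moreover have "l > 0"
      using \<open>l \<in> L\<close> assms(1) by (cases l) auto
    ultimately have "real l' < real n * real l"
      by (simp add: divide_less_eq)
    then show ?thesis
      by (metis of_nat_less_iff of_nat_mult)
  qed
  then show ?thesis
    by (meson finite_lessThan finite_subset lessThan_iff subsetI)
qed simp

lemma elasticity_set_eq_Max_div_Min:
  assumes "finite L" "L \<noteq> {}" "0 \<notin> L"
  shows "elasticity_set L = ereal (real (Max L) / real (Min L))"
proof -
  have "L - {0} = L"
    using assms(3) by blast
  moreover have "Sup ((\<lambda>n. ereal (real n)) ` L) = ereal (real (Max L))"
  proof (rule antisym)
    show "Sup ((\<lambda>n. ereal (real n)) ` L) \<le> ereal (real (Max L))"
      using assms(1) by (intro Sup_least) auto
    show "ereal (real (Max L)) \<le> Sup ((\<lambda>n. ereal (real n)) ` L)"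
      using assms(1,2) by (intro Sup_upper) auto
  qed
  moreover have "Inf L = Min L"
    using assms(1,2) by (rule cInf_eq_Min)
  moreover have "Min L \<noteq> 0"
    using assms Min_in by metis
  ultimately show ?thesis
    using assms(2) by (simp add: elasticity_set_def)
qed

lemma elasticity_set_le_elasticity:
  "L \<in> system_of_lengths H \<Longrightarrow> elasticity_set L \<le> elasticity H"
  unfolding elasticity_def by (rule SUP_upper)

lemma ex_max_ratio:
  fixes num den :: "'g \<Rightarrow> nat"
  assumes "finite G" "g \<in> G" "den g > 0"
  obtains g0 where "g0 \<in> G" "den g0 > 0"
    "\<And>g. g \<in> G \<Longrightarrow> den g > 0 \<Longrightarrow> num g * den g0 \<le> num g0 * den g"
proof -
  define G' where "G' = {g \<in> G. den g > 0}"
  define ratio where "ratio g = real (num g) / real (den g)" for g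
  have "finite (ratio ` G')" "ratio ` G' \<noteq> {}"
    using assms by (auto simp: G'_def)
  then have "Max (ratio ` G') \<in> ratio ` G'"
    by (rule Max_in)
  then obtain g0 where g0: "g0 \<in> G'" "ratio g0 = Max (ratio ` G')"
    by (metis imageE)
  have "num g * den g0 \<le> num g0 * den g" if "g \<in> G" "den g > 0" for g
  proof -
    have "ratio g \<le> ratio g0"
      unfolding g0(2) using \<open>finite (ratio ` G')\<close> that by (intro Max_ge) (auto simp: G'_def)
    then have "real (num g) * real (den g0) \<le> real (num g0) * real (den g)"
      using that g0(1) by (simp add: ratio_def G'_def field_simps)
    then show ?thesis
      by (metis of_nat_le_iff of_nat_mult)
  qed
  moreover have "g0 \<in> G" "den g0 > 0"
    using g0(1) by (simp_all add: G'_def)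
  ultimately show ?thesis
    using that by blast
qed

lemma sum_list_ratio_le:
  fixes num den :: "'g \<Rightarrow> nat"
  assumes "\<And>g. g \<in> set gs \<Longrightarrow> num g * d \<le> n * den g"
  shows "sum_list (map num gs) * d \<le> n * sum_list (map den gs)"
  using assms by (induction gs) (simp_all add: algebra_simps add_mono)

section \<open>Dickson's lemma\<close>

lemma incseq_subseq_nat:
  fixes s :: "nat \<Rightarrow> nat"
  obtains \<tau> where "strict_mono \<tau>" "incseq (\<lambda>n. s (\<tau> n))"
proof -
  obtain \<tau> where \<tau>: "strict_mono \<tau>" "monoseq (\<lambda>n. s (\<tau> n))"
    using seq_monosub by blast
  show ?thesis
  proof (cases "incseq (\<lambda>n. s (\<tau> n))")
    case True
    with \<tau>(1) show ?thesis
      by (rule that)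
  next
    case False
    with \<tau>(2) have dec: "decseq (\<lambda>n. s (\<tau> n))"
      by (simp add: monoseq_iff)
    obtain N where N: "\<And>n. s (\<tau> N) \<le> s (\<tau> n)"
      using ex_has_least_nat[of "\<lambda>_. True" 0 "\<lambda>n. s (\<tau> n)"] by blast
    \<comment> \<open>a non-increasing sequence of naturals is eventually constant\<close>
    have "s (\<tau> (n + N)) = s (\<tau> N)" for n
      using N[of "n + N"] decseqD[OF dec, of N "n + N"] by simp
    then have "incseq (\<lambda>n. s (\<tau> (n + N)))"
      by (simp add: incseq_def)
    moreover have "strict_mono (\<lambda>n. \<tau> (n + N))"
      using \<tau>(1) by (simp add: strict_mono_def)
    ultimately show ?thesis
      using that by blast
  qed
qed

lemma pointwise_incseq_subseq:
  fixes f :: "nat \<Rightarrow> 'b \<Rightarrow> nat"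
  assumes "finite I"
  shows "\<exists>\<sigma>. strict_mono \<sigma> \<and> (\<forall>i\<in>I. incseq (\<lambda>n. f (\<sigma> n) i))"
  using assms
proof (induction I rule: finite_induct)
  case empty
  show ?case
    by (rule exI[of _ id]) (simp add: strict_mono_def)
next
  case (insert i I)
  then obtain \<sigma> where \<sigma>: "strict_mono \<sigma>" "\<forall>i\<in>I. incseq (\<lambda>n. f (\<sigma> n) i)"
    by blast
  obtain \<tau> where \<tau>: "strict_mono \<tau>" "incseq (\<lambda>n. f (\<sigma> (\<tau> n)) i)"
    using incseq_subseq_nat .
  have "incseq (\<lambda>n. f (\<sigma> (\<tau> n)) j)" if "j \<in> I" for j
    using \<sigma>(2) that \<tau>(1) by (simp add: incseq_def strict_mono_less_eq)
  moreover have "strict_mono (\<lambda>n. \<sigma> (\<tau> n))"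
    using strict_mono_o[OF \<sigma>(1) \<tau>(1)] by (simp add: comp_def)
  ultimately show ?case
    using \<tau>(2) by (intro exI[of _ "\<lambda>n. \<sigma> (\<tau> n)"]) auto
qed

definition subpair :: "'a multiset \<times> 'a multiset \<Rightarrow> 'a multiset \<times> 'a multiset \<Rightarrow> bool" where
  "subpair q r \<longleftrightarrow> fst q \<subseteq># fst r \<and> snd q \<subseteq># snd r"

lemma subset_mset_if_count_le_on:
  "set_mset M \<subseteq> A \<Longrightarrow> (\<And>x. x \<in> A \<Longrightarrow> count M x \<le> count N x) \<Longrightarrow> M \<subseteq># N"
  unfolding subseteq_mset_def by (metis count_eq_zero_iff le0 subsetD)

lemma finite_if_subpair_antichain:
  assumes "finite A" and S: "\<And>r. r \<in> S \<Longrightarrow> set_mset (fst r) \<subseteq> A \<and> set_mset (snd r) \<subseteq> A"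
    and antichain: "\<And>q r. q \<in> S \<Longrightarrow> r \<in> S \<Longrightarrow> subpair q r \<Longrightarrow> q = r"
  shows "finite S"
proof (rule ccontr)
  assume "infinite S"
  then obtain g :: "nat \<Rightarrow> _" where g: "inj g" "range g \<subseteq> S"
    using infinite_countable_subset by blast
  define v where "v n = case_sum (count (fst (g n))) (count (snd (g n)))" for n
  obtain \<sigma> where \<sigma>: "strict_mono \<sigma>" "\<forall>z\<in>A <+> A. incseq (\<lambda>n. v (\<sigma> n) z)"
    using pointwise_incseq_subseq[of "A <+> A" v] \<open>finite A\<close> by (metis finite_Plus)
  let ?q = "g (\<sigma> 0)" and ?r = "g (\<sigma> 1)"
  have le: "v (\<sigma> 0) z \<le> v (\<sigma> 1) z" if "z \<in> A <+> A" for z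
    using \<sigma>(2) that by (auto intro: incseqD)
  have "?q \<in> S" "?r \<in> S"
    using g(2) by auto
  moreover have "count (fst ?q) x \<le> count (fst ?r) x" "count (snd ?q) x \<le> count (snd ?r) x"
    if "x \<in> A" for x
    using le[OF InlI[OF that]] le[OF InrI[OF that]] by (simp_all add: v_def)
  then have "subpair ?q ?r"
    unfolding subpair_def using S[OF \<open>?q \<in> S\<close>] by (auto intro: subset_mset_if_count_le_on)
  ultimately have "?q = ?r"
    by (rule antichain)
  then show False
    using g(1) \<sigma>(1) by (simp add: inj_eq strict_mono_eq)
qed

section \<open>Reduced unit-cancellative monoids\<close>

definition rho_increments_bounded :: "'a::monoid_mult itself \<Rightarrow> bool" where
  "rho_increments_bounded H \<longleftrightarrow>
     (\<exists>M::nat. M > 0 \<and> (\<forall>k\<ge>2. rho_k H k \<le> rho_k H (k - 1) + ereal (real M))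
        \<and> (\<forall>k\<ge>1. rho_k H k < \<infinity>))"

locale reduced_unit_cancellative =
  fixes H :: "'a::monoid_mult itself"
  assumes reduced: "reduced H" and unit_cancellative: "unit_cancellative H"
begin

lemma is_unit_iff_eq_one: "is_unit (u::'a) \<longleftrightarrow> u = 1"
  using reduced by (auto simp: reduced_def)

lemma is_unit_if_right_absorbed: "(a::'a) = a * u \<Longrightarrow> is_unit u"
  using unit_cancellative by (simp add: unit_cancellative_def)

lemma mult_eq_one_iff: "(a::'a) * b = 1 \<longleftrightarrow> a = 1 \<and> b = 1"
proof
  assume ab: "a * b = 1"
  \<comment> \<open>\<open>b * a\<close> is idempotent, hence a unit by unit-cancellativity\<close>
  have "(b * a) * (b * a) = b * (a * b) * a"
    by (simp add: mult.assoc)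
  then have "is_unit (b * a)"
    using ab by (intro is_unit_if_right_absorbed[of "b * a"]) simp
  then have "b * a = 1"
    by (simp add: is_unit_iff_eq_one)
  with ab have "is_unit a"
    by (auto simp: is_unit_def)
  with ab show "a = 1 \<and> b = 1"
    by (simp add: is_unit_iff_eq_one)
qed simp

lemma prod_list_atoms_eq_one_iff:
  "atom_list (xs::'a list) \<Longrightarrow> prod_list xs = 1 \<longleftrightarrow> xs = []"
  by (induction xs) (auto simp: mult_eq_one_iff dest: atom_neq_one)

lemma ex_atom:
  assumes "atomic H" "(a::'a) \<noteq> 1"
  obtains u :: 'a where "is_atom u"
proof -
  have "\<not> is_unit a"
    using assms(2) by (simp add: is_unit_iff_eq_one)
  then obtain xs :: "'a list" where "xs \<noteq> []" "atom_list xs"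
    using atomicD[OF assms(1)] by blast
  then show ?thesis
    using that[of "hd xs"] by simp
qed

lemma length_mem_lengths: "atom_list (xs::'a list) \<Longrightarrow> length xs \<in> lengths (prod_list xs)"
  by (auto simp: lengths_def prod_list_atoms_eq_one_iff)

lemma length_mem_union_of_sets_of_lengths:
  "(xs, ys) \<in> relations_list H \<Longrightarrow> length ys \<in> union_of_sets_of_lengths H (length xs)"
  unfolding mem_union_of_sets_of_lengths_iff
  by (metis mem_relations_list_iff length_mem_lengths)

lemma pumpable_relation_Nil: "pumpable_relation ([]::'a list) E \<Longrightarrow> E = []"
proof -
  assume "pumpable_relation ([]::'a list) E"
  then obtain X where E: "atom_list E"
    and pump: "\<And>j. prod_list (X @ concat (replicate j [])) = prod_list (X @ concat (replicate j E))"
    unfolding pumpable_relation_def by blast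
  from pump[of 1] have "prod_list X = prod_list X * prod_list E"
    by simp
  then show "E = []"
    using E is_unit_if_right_absorbed is_unit_iff_eq_one prod_list_atoms_eq_one_iff by blast
qed

lemma pumped_length_mem_union_of_sets_of_lengths:
  fixes X D E :: "'a list"
  assumes "atom_list X" "atom_list D" "atom_list E" "D \<noteq> []"
    and pump: "\<And>j. prod_list (X @ concat (replicate j D)) = prod_list (X @ concat (replicate j E))"
  obtains l where "l \<in> union_of_sets_of_lengths H n"
    "length E * n \<le> length D * (l + length E * (length X + length D))"
proof -
  define p t c where "p = length D" and "t = length E" and "c = length X"
  have "p > 0"
    using \<open>D \<noteq> []\<close> by (simp add: p_def)
  have u: "is_atom (hd D)"
    using assms(2,4) by simp
  show ?thesis
  proof (cases "n < c")
    case True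
    have "n \<in> union_of_sets_of_lengths H n"
      using length_mem_union_of_sets_of_lengths[of "replicate n (hd D)" "replicate n (hd D)"] u
      by simp
    moreover have "t * n \<le> p * (n + t * (c + p))"
    proof -
      have "t * n \<le> t * (c + p)"
        using True by simp
      also have "\<dots> \<le> p * (t * (c + p))"
        using \<open>p > 0\<close> by simp
      finally show ?thesis
        by (simp add: algebra_simps)
    qed
    ultimately show ?thesis
      using that by (simp add: p_def t_def c_def)
  next
    case False
    define j r where "j = (n - c) div p" and "r = (n - c) mod p"
    have n: "n = c + j * p + r" and "r < p"
      using False \<open>p > 0\<close> by (simp_all add: j_def r_def)
    define xs ys where "xs = X @ concat (replicate j D) @ replicate r (hd D)"
      and "ys = X @ concat (replicate j E) @ replicate r (hd D)"
    have "(xs, ys) \<in> relations_list H"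
      using assms u pump[of j] by (auto simp: xs_def ys_def mult.assoc[symmetric])
    moreover have "length xs = n" "length ys = c + j * t + r"
      using n by (simp_all add: xs_def ys_def p_def t_def c_def length_concat sum_list_replicate)
    ultimately have "c + j * t + r \<in> union_of_sets_of_lengths H n"
      using length_mem_union_of_sets_of_lengths by metis
    moreover have "t * n \<le> p * ((c + j * t + r) + t * (c + p))"
    proof -
      have "t * n \<le> j * p * t + t * (c + p)"
        using \<open>r < p\<close> unfolding n by (simp add: algebra_simps)
      also have "\<dots> \<le> j * p * t + p * (t * (c + p))"
        using \<open>p > 0\<close> by simp
      finally show ?thesis
        by (simp add: algebra_simps)
    qed
    ultimately show ?thesis
      using that by (simp add: p_def t_def c_def)
  qed
qed

theorem rho_increments_boundedI:
  fixes D E :: "'a list"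
  assumes "pumpable_relation D E" "D \<noteq> []"
    and bound: "\<forall>(xs, ys)\<in>relations_list H. length ys * length D \<le> length E * length xs"
  shows "rho_increments_bounded H"
proof -
  obtain X where DE: "atom_list D" "atom_list E" and X: "atom_list X"
    and pump: "\<And>j. prod_list (X @ concat (replicate j D)) = prod_list (X @ concat (replicate j E))"
    using assms(1) unfolding pumpable_relation_def by blast
  define p t where "p = length D" and "t = length E"
  define M where "M = t * (length X + p) + t + 1"
  have "p > 0"
    using \<open>D \<noteq> []\<close> by (simp add: p_def)
  have upper: "rho_k H k \<le> ereal (real (t * k) / real p)" if "k \<ge> 1" for k
    using rho_k_le_if_length_ratio_bound[OF \<open>p > 0\<close>] bound that by (simp add: p_def t_def)
  have step: "rho_k H k \<le> rho_k H (k - 1) + ereal (real M)" if "k \<ge> 2" for k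
  proof -
    obtain l where l: "l \<in> union_of_sets_of_lengths H (k - 1)"
      "t * (k - 1) \<le> p * (l + t * (length X + p))"
      unfolding p_def t_def
      by (rule pumped_length_mem_union_of_sets_of_lengths[OF X DE \<open>D \<noteq> []\<close> pump])
    have "t * k = t * (k - 1) + t"
      using that by (cases k) simp_all
    also have "\<dots> \<le> p * (l + t * (length X + p)) + p * t"
      using l(2) \<open>p > 0\<close> by (intro add_mono) simp_all
    also have "\<dots> \<le> p * (l + M)"
      by (simp add: M_def algebra_simps)
    finally have "real (t * k) \<le> real p * (real l + real M)"
      by (metis of_nat_add of_nat_le_iff of_nat_mult)
    then have "real (t * k) / real p \<le> real l + real M"
      using \<open>p > 0\<close> by (simp add: pos_divide_le_eq mult.commute)
    moreover have "rho_k H k \<le> ereal (real (t * k) / real p)"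
      using that by (intro upper) simp
    ultimately have "rho_k H k \<le> ereal (real l + real M)"
      by (meson ereal_less_eq(3) order_trans)
    also have "\<dots> = ereal (real l) + ereal (real M)"
      by simp
    also have "\<dots> \<le> rho_k H (k - 1) + ereal (real M)"
      using le_rho_k[OF l(1)] by (rule add_right_mono)
    finally show ?thesis .
  qed
  have finite: "rho_k H k < \<infinity>" if "k \<ge> 1" for k
    using upper[OF that] by (rule le_less_trans) simp
  have "M > 0"
    by (simp add: M_def)
  then show ?thesis
    unfolding rho_increments_bounded_def using step finite by blast
qed

lemma length_ratio_le_elasticity:
  assumes "(xs, ys) \<in> relations_list H" "xs \<noteq> []"
  shows "ereal (real (length ys) / real (length xs)) \<le> elasticity H"
proof -
  have "atom_list xs" "atom_list ys" "prod_list ys = prod_list xs"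
    using assms(1) by simp_all
  then have "length xs \<in> lengths (prod_list xs)" "length ys \<in> lengths (prod_list xs)"
    using length_mem_lengths by metis+
  moreover have "0 \<notin> lengths (prod_list xs)"
    using assms(2) \<open>atom_list xs\<close> by (simp add: lengths_def prod_list_atoms_eq_one_iff)
  ultimately have "ereal (real (length ys) / real (length xs)) \<le> elasticity_set (lengths (prod_list xs))"
    by (intro elasticity_set_ge_ratio)
  also have "\<dots> \<le> elasticity H"
    by (rule elasticity_set_le_elasticity) (simp add: system_of_lengths_def)
  finally show ?thesis .
qed

lemma length_ratio_bound_if_elasticity_eq:
  assumes "elasticity H = ereal (real t / real p)" "p > 0"
  shows "\<forall>(xs, ys)\<in>relations_list H. length ys * p \<le> t * length xs"
proof clarify
  fix xs ys :: "'a list"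
  assume rel: "(xs, ys) \<in> relations_list H"
  show "length ys * p \<le> t * length xs"
  proof (cases "xs = []")
    case True
    then show ?thesis
      using rel by (auto simp: prod_list_atoms_eq_one_iff)
  next
    case False
    then have "real (length ys) / real (length xs) \<le> real t / real p"
      using length_ratio_le_elasticity[OF rel] assms(1) by simp
    then have "real (length ys) * real p \<le> real t * real (length xs)"
      using False \<open>p > 0\<close> by (simp add: divide_le_eq le_divide_eq mult.commute mult.left_commute)
    then show ?thesis
      by (metis of_nat_le_iff of_nat_mult)
  qed
qed

theorem rho_increments_bounded_if_elasticity_attained:
  fixes u :: 'a
  assumes "is_atom u" "L \<in> system_of_lengths H" "elasticity_set L = elasticity H"
    "elasticity H < \<infinity>"
  shows "rho_increments_bounded H"
proof -
  obtain a :: 'a where L: "L = lengths a"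
    using assms(2) by (auto simp: system_of_lengths_def)
  obtain D E where "(D, E) \<in> relations_list H" "D \<noteq> []"
    and ratio: "elasticity H = ereal (real (length E) / real (length D))"
  proof (cases "L - {0} = {}")
    case True
    then have "elasticity H = ereal (real (length [u]) / real (length [u]))"
      using assms(3) by (simp add: elasticity_set_def one_ereal_def)
    then show ?thesis
      using that[of "[u]" "[u]"] assms(1) by simp
  next
    case False
    then have "L \<noteq> {}"
      by blast
    have "a \<noteq> 1"
      using False L by (cases "a = 1") (simp_all add: lengths_def)
    then have "0 \<notin> L"
      using L by (simp add: lengths_def)
    then have "finite L"
      using assms(3,4) by (simp add: finite_if_elasticity_set_less_infinity)
    obtain D where D: "atom_list D" "prod_list D = a" "length D = Min L"
      using Min_in[OF \<open>finite L\<close> \<open>L \<noteq> {}\<close>] L \<open>a \<noteq> 1\<close> by (metis mem_lengthsE)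
    obtain E where E: "atom_list E" "prod_list E = a" "length E = Max L"
      using Max_in[OF \<open>finite L\<close> \<open>L \<noteq> {}\<close>] L \<open>a \<noteq> 1\<close> by (metis mem_lengthsE)
    have "D \<noteq> []"
      using D(3) Min_in[OF \<open>finite L\<close> \<open>L \<noteq> {}\<close>] \<open>0 \<notin> L\<close> by auto
    moreover have "elasticity H = ereal (real (length E) / real (length D))"
      using elasticity_set_eq_Max_div_Min[OF \<open>finite L\<close> \<open>L \<noteq> {}\<close> \<open>0 \<notin> L\<close>] assms(3) D E
      by simp
    ultimately show ?thesis
      using D E by (intro that[of D E]) simp_all
  qed
  then show ?thesis
    using rho_increments_boundedI pumpable_relation_if_relation
      length_ratio_bound_if_elasticity_eq by blast
qed

theorem rho_increments_bounded_if_length_decompositions: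
  fixes den num :: "'g \<Rightarrow> nat" and u :: 'a
  assumes "finite G" "is_atom u"
    and realize: "\<And>g. g \<in> G \<Longrightarrow>
      \<exists>D E :: 'a list. pumpable_relation D E \<and> length D = den g \<and> length E = num g"
    and decompose: "\<And>xs ys. (xs, ys) \<in> relations_list H \<Longrightarrow>
      \<exists>gs. set gs \<subseteq> G \<and> length xs = sum_list (map den gs) \<and> length ys = sum_list (map num gs)"
  shows "rho_increments_bounded H"
proof -
  have num_eq_0: "num g = 0" if g: "g \<in> G" "den g = 0" for g
  proof -
    obtain D E :: "'a list" where "pumpable_relation D E" "length D = den g" "length E = num g"
      using realize[OF g(1)] by blast
    then show ?thesis
      using g(2) pumpable_relation_Nil by fastforce
  qed
  obtain gs where gs: "set gs \<subseteq> G" "sum_list (map den gs) = 1"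
    using decompose[of "[u]" "[u]"] \<open>is_atom u\<close> by auto
  have "\<exists>g\<in>set gs. den g \<noteq> 0"
  proof (rule ccontr)
    assume "\<not> (\<exists>g\<in>set gs. den g \<noteq> 0)"
    then have "sum_list (map den gs) = 0"
      by simp
    with gs(2) show False
      by simp
  qed
  then obtain g where "g \<in> G" "den g > 0"
    using gs(1) by blast
  then obtain g0 where g0: "g0 \<in> G" "den g0 > 0"
    and max: "\<And>g. g \<in> G \<Longrightarrow> den g > 0 \<Longrightarrow> num g * den g0 \<le> num g0 * den g"
    using ex_max_ratio[OF \<open>finite G\<close>] by blast
  obtain D E :: "'a list" where DE: "pumpable_relation D E" "length D = den g0" "length E = num g0"
    using realize[OF g0(1)] by blast
  have "length ys * length D \<le> length E * length xs" if rel: "(xs, ys) \<in> relations_list H" for xs ys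
  proof -
    obtain gs where "set gs \<subseteq> G" "length xs = sum_list (map den gs)"
      "length ys = sum_list (map num gs)"
      using decompose[OF rel] by blast
    moreover have "num g * den g0 \<le> num g0 * den g" if "g \<in> G" for g
      using max[OF that] num_eq_0[OF that] by (cases "den g = 0") simp_all
    ultimately show ?thesis
      using DE(2,3) by (auto intro: sum_list_ratio_le)
  qed
  moreover have "D \<noteq> []"
    using DE(2) g0(2) by auto
  ultimately show ?thesis
    using rho_increments_boundedI[OF DE(1)] by blast
qed

corollary rho_increments_bounded_if_relations_list_generated:
  fixes u :: 'a
  assumes "is_atom u" "finite G" "G \<subseteq> relations_list H"
    and gen: "\<forall>r\<in>relations_list H. \<exists>gs. set gs \<subseteq> G \<and> r = (concat (map fst gs), concat (map snd gs))"
  shows "rho_increments_bounded H"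
proof (rule rho_increments_bounded_if_length_decompositions[OF \<open>finite G\<close> \<open>is_atom u\<close>,
    where den = "\<lambda>g. length (fst g)" and num = "\<lambda>g. length (snd g)"])
  show "\<exists>D E :: 'a list. pumpable_relation D E \<and> length D = length (fst g) \<and> length E = length (snd g)"
    if "g \<in> G" for g
    using that assms(3) pumpable_relation_if_relation[of "fst g" "snd g"] by auto
  show "\<exists>gs. set gs \<subseteq> G \<and> length xs = (\<Sum>g\<leftarrow>gs. length (fst g))
      \<and> length ys = (\<Sum>g\<leftarrow>gs. length (snd g))"
    if rel: "(xs, ys) \<in> relations_list H" for xs ys
  proof -
    obtain gs where "set gs \<subseteq> G" "xs = concat (map fst gs)" "ys = concat (map snd gs)"
      using gen rel by blast
    then show ?thesis
      by (auto simp: length_concat comp_def)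
  qed
qed

corollary rho_increments_bounded_if_relations_mset_generated:
  fixes u :: 'a
  assumes "is_atom u" "finite G" "G \<subseteq> relations_mset H"
    and gen: "\<forall>r\<in>relations_mset H. \<exists>gs. set gs \<subseteq> G \<and> r = (sum_list (map fst gs), sum_list (map snd gs))"
  shows "rho_increments_bounded H"
proof (rule rho_increments_bounded_if_length_decompositions[OF \<open>finite G\<close> \<open>is_atom u\<close>,
    where den = "\<lambda>g. size (fst g)" and num = "\<lambda>g. size (snd g)"])
  show "\<exists>D E :: 'a list. pumpable_relation D E \<and> length D = size (fst g) \<and> length E = size (snd g)"
    if g: "g \<in> G" for g
  proof -
    obtain xs ys where "g = (mset xs, mset ys)" "(xs, ys) \<in> relations_list H"
      using g assms(3) unfolding relations_mset_eq_image by auto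
    then show ?thesis
      using pumpable_relation_if_relation by auto
  qed
  show "\<exists>gs. set gs \<subseteq> G \<and> length xs = (\<Sum>g\<leftarrow>gs. size (fst g))
      \<and> length ys = (\<Sum>g\<leftarrow>gs. size (snd g))"
    if "(xs, ys) \<in> relations_list H" for xs ys
  proof -
    have "(mset xs, mset ys) \<in> relations_mset H"
      using that unfolding relations_mset_eq_image by (rule rev_image_eqI) simp
    then obtain gs where "set gs \<subseteq> G" "mset xs = sum_list (map fst gs)" "mset ys = sum_list (map snd gs)"
      using gen by blast
    then show ?thesis
      by (metis size_mset size_sum_list_map)
  qed
qed

corollary rho_increments_bounded_if_relations_fin_gen:
  fixes u :: 'a
  assumes "is_atom u" "relations_fin_gen H"
  shows "rho_increments_bounded H"
proof (cases "commutative H")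
  case True
  then show ?thesis
    using assms rho_increments_bounded_if_relations_mset_generated
    unfolding relations_fin_gen_def by metis
next
  case False
  then show ?thesis
    using assms rho_increments_bounded_if_relations_list_generated
    unfolding relations_fin_gen_def by metis
qed

end

section \<open>Commutative monoids\<close>

text \<open>\<open>SOME\<close> picks an arbitrary ordering of the factors, so \<open>mset_prod\<close> is meaningful
  only in a commutative monoid.\<close>
definition mset_prod :: "'a::monoid_mult multiset \<Rightarrow> 'a" where
  "mset_prod D = prod_list (SOME xs. mset xs = D)"

text \<open>Without cancellativity the relations of \<open>H\<close> are not closed under taking differences;
  relations up to a common factor \<open>c\<close> are, which makes their minimal elements generate.\<close>
definition weak_relations :: "'a::monoid_mult itself \<Rightarrow> ('a multiset \<times> 'a multiset) set" where
  "weak_relations _ = {(D, E). (\<forall>x\<in>#D. is_atom x) \<and> (\<forall>x\<in>#E. is_atom x)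
      \<and> (\<exists>c. c * mset_prod D = c * mset_prod E)}"

definition minimal_weak_relations :: "'a::monoid_mult itself \<Rightarrow> ('a multiset \<times> 'a multiset) set" where
  "minimal_weak_relations H = {r \<in> weak_relations H. r \<noteq> ({#}, {#}) \<and>
      (\<forall>q\<in>weak_relations H. q \<noteq> ({#}, {#}) \<longrightarrow> subpair q r \<longrightarrow> q = r)}"

locale comm_reduced_unit_cancellative = reduced_unit_cancellative +
  assumes commutative: "commutative H"
begin

lemma mult_commute: "(a::'a) * b = b * a"
  using commutative by (simp add: commutative_def)

lemma mult_left_commute: "(a::'a) * (b * c) = b * (a * c)"
  by (metis mult.assoc mult_commute)

lemmas mult_ac = mult.assoc mult_commute mult_left_commute

lemma prod_list_eq_if_mset_eq: "mset (xs::'a list) = mset ys \<Longrightarrow> prod_list xs = prod_list ys"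
proof -
  assume "mset xs = mset ys"
  then have "fold (*) (rev xs) = fold ((*) :: 'a \<Rightarrow> _) (rev ys)"
    by (intro fold_multiset_equiv) (simp_all add: fun_eq_iff mult_left_commute)
  then show ?thesis
    by (simp add: prod_list.eq_foldr foldr_conv_fold)
qed

lemma mset_prod_mset [simp]: "mset_prod (mset (xs::'a list)) = prod_list xs"
proof -
  have "mset (SOME ys. mset ys = mset xs) = mset xs"
    by (rule someI[of _ xs]) simp
  then show ?thesis
    unfolding mset_prod_def by (rule prod_list_eq_if_mset_eq)
qed

lemma mset_prod_add: "mset_prod (D + E) = mset_prod D * (mset_prod E :: 'a)"
  by (metis ex_mset mset_append mset_prod_mset prod_list.append)

lemma mem_weak_relations_if_relation:
  "(xs, ys) \<in> relations_list H \<Longrightarrow> (mset xs, mset ys) \<in> weak_relations H"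
  unfolding weak_relations_def by (auto intro!: exI[of _ 1])

lemma weak_relations_diff:
  assumes "(D, E) \<in> weak_relations H" "(D + D', E + E') \<in> weak_relations H"
  shows "(D', E') \<in> weak_relations H"
proof -
  obtain a where a: "a * mset_prod D = a * mset_prod E"
    using assms(1) unfolding weak_relations_def by auto
  obtain b where b: "b * (mset_prod D * mset_prod D') = b * (mset_prod E * mset_prod E')"
    using assms(2) unfolding weak_relations_def by (auto simp: mset_prod_add)
  define c where "c = a * b * mset_prod D"
  have "c * mset_prod D' = a * (b * (mset_prod D * mset_prod D'))"
    by (simp add: c_def mult_ac)
  also have "\<dots> = a * (b * (mset_prod E * mset_prod E'))"
    by (simp add: b)
  also have "\<dots> = b * (a * mset_prod E) * mset_prod E'"
    by (simp add: mult_ac)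
  also have "\<dots> = b * (a * mset_prod D) * mset_prod E'"
    by (simp add: a)
  also have "\<dots> = c * mset_prod E'"
    by (simp add: c_def mult_ac)
  finally show ?thesis
    using assms(2) unfolding weak_relations_def by auto
qed

lemma pumpable_relation_if_weak_relation:
  assumes "atomic H" "(mset D, mset E) \<in> weak_relations H"
  shows "pumpable_relation D E"
proof -
  obtain c where c: "c * prod_list D = c * prod_list E"
    using assms(2) unfolding weak_relations_def by auto
  obtain X where X: "atom_list X" "prod_list X = c"
  proof (cases "c = 1")
    case True
    then show ?thesis
      using that[of "[]"] by simp
  next
    case False
    then have "\<not> is_unit c"
      by (simp add: is_unit_iff_eq_one)
    then show ?thesis
      using atomicD[OF assms(1)] that by blast
  qed
  have "c * prod_list D ^ j = c * prod_list E ^ j" for j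
  proof (induction j)
    case (Suc j)
    have "c * prod_list D ^ Suc j = (c * prod_list D ^ j) * prod_list D"
      by (simp add: mult_ac)
    also have "\<dots> = (c * prod_list D) * prod_list E ^ j"
      by (simp add: Suc mult_ac)
    also have "\<dots> = c * prod_list E ^ Suc j"
      by (simp add: c mult_ac)
    finally show ?case .
  qed simp
  then show ?thesis
    using assms(2) X unfolding pumpable_relation_def weak_relations_def
    by (auto simp: prod_list_concat_replicate)
qed

lemma weak_relation_decomposition:
  "r \<in> weak_relations H \<Longrightarrow> \<exists>gs. set gs \<subseteq> minimal_weak_relations H
      \<and> fst r = sum_list (map fst gs) \<and> snd r = sum_list (map snd gs)"
proof (induction r rule: measure_induct_rule[of "\<lambda>r. size (fst r) + size (snd r)"])
  case (less r)
  show ?case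
  proof (cases "r = ({#}, {#}) \<or> r \<in> minimal_weak_relations H")
    case True
    then show ?thesis
      by (elim disjE) (auto intro: exI[of _ "[]"] exI[of _ "[r]"])
  next
    case False
    then obtain q where q: "q \<in> weak_relations H" "q \<noteq> ({#}, {#})" "subpair q r" "q \<noteq> r"
      using less.prems unfolding minimal_weak_relations_def by auto
    then obtain D' E' where r: "fst r = fst q + D'" "snd r = snd q + E'"
      unfolding subpair_def by (meson mset_subset_eq_exists_conv)
    then have "r = (fst q + D', snd q + E')"
      by (simp add: prod_eq_iff)
    then have d: "(D', E') \<in> weak_relations H"
      using weak_relations_diff[of "fst q" "snd q" D' E'] q(1) less.prems by simp
    have "D' \<noteq> {#} \<or> E' \<noteq> {#}" "fst q \<noteq> {#} \<or> snd q \<noteq> {#}"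
      using q(2,4) r by (auto simp: prod_eq_iff)
    then obtain gs1 gs2 where
      "set gs1 \<subseteq> minimal_weak_relations H" "fst q = sum_list (map fst gs1)" "snd q = sum_list (map snd gs1)"
      "set gs2 \<subseteq> minimal_weak_relations H" "D' = sum_list (map fst gs2)" "E' = sum_list (map snd gs2)"
      using less.IH[OF _ q(1)] less.IH[OF _ d] r by (fastforce simp: nonempty_has_size)
    then show ?thesis
      using r by (intro exI[of _ "gs1 @ gs2"]) simp
  qed
qed

lemma finite_minimal_weak_relations:
  assumes "finite {x::'a. is_atom x}"
  shows "finite (minimal_weak_relations H)"
  using assms
proof (rule finite_if_subpair_antichain)
  show "set_mset (fst r) \<subseteq> {x. is_atom x} \<and> set_mset (snd r) \<subseteq> {x. is_atom x}"
    if "r \<in> minimal_weak_relations H" for r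
    using that unfolding minimal_weak_relations_def weak_relations_def by auto
  show "q = r" if "q \<in> minimal_weak_relations H" "r \<in> minimal_weak_relations H" "subpair q r" for q r
    using that unfolding minimal_weak_relations_def by blast
qed

theorem rho_increments_bounded_if_finitely_generated:
  fixes u :: 'a
  assumes "is_atom u" "atomic H" "finitely_generated H"
  shows "rho_increments_bounded H"
proof -
  obtain A :: "'a set" where "finite A" and gen: "\<And>a. \<exists>xs. set xs \<subseteq> A \<and> prod_list xs = a"
    using assms(3) unfolding finitely_generated_def by blast
  have "{x. is_atom x} \<subseteq> A"
    using gen atom_mem_if_prod_list_eq[OF reduced] by blast
  then have "finite (minimal_weak_relations H)"
    using \<open>finite A\<close> finite_minimal_weak_relations finite_subset by blast
  then show ?thesis
  proof (rule rho_increments_bounded_if_length_decompositions[OF _ \<open>is_atom u\<close>,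
      where den = "\<lambda>g. size (fst g)" and num = "\<lambda>g. size (snd g)"])
    show "\<exists>D E :: 'a list. pumpable_relation D E \<and> length D = size (fst g) \<and> length E = size (snd g)"
      if "g \<in> minimal_weak_relations H" for g
    proof -
      obtain D E where "mset D = fst g" "mset E = snd g"
        by (metis ex_mset)
      moreover have "g \<in> weak_relations H"
        using that by (simp add: minimal_weak_relations_def)
      ultimately show ?thesis
        using pumpable_relation_if_weak_relation[OF assms(2)] by (metis prod.collapse size_mset)
    qed
    show "\<exists>gs. set gs \<subseteq> minimal_weak_relations H \<and> length xs = (\<Sum>g\<leftarrow>gs. size (fst g))
        \<and> length ys = (\<Sum>g\<leftarrow>gs. size (snd g))"
      if "(xs, ys) \<in> relations_list H" for xs ys
      using weak_relation_decomposition[OF mem_weak_relations_if_relation[OF that]]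
      by (metis fst_conv snd_conv size_mset size_sum_list_map)
  qed
qed

end

theorem proposition3p5:
  fixes H :: "'a::monoid_mult itself"
  assumes nontriv: "\<exists>x::'a. x \<noteq> 1"
    and "reduced H" and "atomic H" and "unit_cancellative H"
    and "(\<exists>L\<in>system_of_lengths H. elasticity_set L = elasticity H \<and> elasticity H < \<infinity>)
         \<or> (cancellative H \<and> relations_fin_gen H)
         \<or> (commutative H \<and> finitely_generated H)"
  shows "\<exists>M::nat. M > 0 \<and> (\<forall>k\<ge>2. rho_k H k \<le> rho_k H (k - 1) + ereal (real M))
           \<and> (\<forall>k\<ge>1. rho_k H k < \<infinity>)"
proof -
  interpret reduced_unit_cancellative H
    using assms(2,4) by unfold_locales
  obtain x :: 'a where "x \<noteq> 1"
    using nontriv by blast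
  then obtain u :: 'a where u: "is_atom u"
    by (rule ex_atom[OF \<open>atomic H\<close>])
  from assms(5) have "rho_increments_bounded H"
  proof (elim disjE conjE bexE)
    fix L assume "L \<in> system_of_lengths H" "elasticity_set L = elasticity H" "elasticity H < \<infinity>"
    then show ?thesis
      by (rule rho_increments_bounded_if_elasticity_attained[OF u])
  next
    assume "relations_fin_gen H"
    then show ?thesis
      by (rule rho_increments_bounded_if_relations_fin_gen[OF u])
  next
    assume "commutative H" "finitely_generated H"
    then interpret comm_reduced_unit_cancellative H
      by unfold_locales
    show ?thesis
      using rho_increments_bounded_if_finitely_generated[OF u \<open>atomic H\<close>
          \<open>finitely_generated H\<close>] .
  qed
  then show ?thesis
    unfolding rho_increments_bounded_def .
qed

end
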